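(* Let $(S(t),I(t))$ be a solution of the impulsive system $\dot S=S(A-S)-\beta_0 IS$, $\dot I=\beta_0 IS-(\sigma+g)I$ for $t\neq nT$, $S(nT)=(1-p)S(nT^-)$, $I(nT)=I(nT^-)$, with positive initial conditions in $$\mathcal{M}=\left\{(S,I)\in(\mathbb{R}_0^+)^2:\ 0\le S\le A,\ 0\le S+I\le\tfrac{A(\sigma+g+A)}{\sigma+g}\right\}.$$ If $\mathcal{R}_p<1$, then $\lim_{t\to+\infty}I(t)=0$.
   Context: Parameters: $A\in(0,1]$, $\beta_0>0$, $\sigma,g\ge0$ with $\sigma+g>0$, $p\in[0,1)$, $T>0$; it is assumed $S(t)\le A$. $\mathcal{R}_p=\frac{\beta_0}{\sigma+g}\frac1T\int_0^T\mathcal{S}(t)\,dt$, where $\mathcal{S}(t)=\frac{A[e^{AT}(1-p)-1]}{e^{AT}(1-p)-1+pe^{A(T-t)}}$ for $0\le t<T$; equivalently $\mathcal{R}_p=\frac{A\beta_0}{\sigma+g}\left[\frac{\ln(1-p)}{AT}+1\right]$. *)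

theory Defs
  imports "HOL-Analysis.Analysis"
begin

text \<open>Periodic solution of the susceptible subsystem (valid on [0,T)).\<close>
definition Sper :: "real \<Rightarrow> real \<Rightarrow> real \<Rightarrow> real \<Rightarrow> real" where
  "Sper A p T t = A * (exp (A*T) * (1 - p) - 1) / (exp (A*T) * (1 - p) - 1 + p * exp (A*(T - t)))"

definition Rp :: "real \<Rightarrow> real \<Rightarrow> real \<Rightarrow> real \<Rightarrow> real \<Rightarrow> real \<Rightarrow> real" where
  "Rp A \<beta>0 \<sigma> g p T = \<beta>0 / (\<sigma> + g) * (1 / T) * integral {0..T} (Sper A p T)"

definition regionM :: "real \<Rightarrow> real \<Rightarrow> real \<Rightarrow> (real \<times> real) set" where
  "regionM A \<sigma> g = {(s, i). 0 \<le> s \<and> 0 \<le> i \<and> s \<le> A \<and> s + i \<le> A * (\<sigma> + g + A) / (\<sigma> + g)}"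

definition impulsive_solution ::
  "real \<Rightarrow> real \<Rightarrow> real \<Rightarrow> real \<Rightarrow> real \<Rightarrow> real \<Rightarrow> (real \<Rightarrow> real) \<Rightarrow> (real \<Rightarrow> real) \<Rightarrow> bool" where
  "impulsive_solution A \<beta>0 \<sigma> g p T S I \<longleftrightarrow>
     (\<forall>t>0. (\<forall>n::nat. t \<noteq> real n * T) \<longrightarrow>
        (S has_real_derivative (S t * (A - S t) - \<beta>0 * I t * S t)) (at t) \<and>
        (I has_real_derivative (\<beta>0 * I t * S t - (\<sigma> + g) * I t)) (at t)) \<and>
     (\<forall>n::nat. continuous (at_right (real n * T)) S) \<and>
     continuous (at_right 0) I \<and>
     (\<forall>n::nat. n \<ge> 1 \<longrightarrow>
        (\<exists>L. (S \<longlongrightarrow> L) (at_left (real n * T)) \<and> S (real n * T) = (1 - p) * L) \<and>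
        isCont I (real n * T))"

end

theory Submission
  imports Defs
begin

text \<open>
  On each period S is a subsolution of the logistic equation \<open>s' = s (A - s)\<close>, so \<open>1 / S\<close> is
  bounded below by the reciprocal logistic flow. Together with the pulse this gives
  \<open>1 / S (n T) \<ge> w n\<close> for the affine recurrence \<open>w (n + 1) = a w n + b\<close> with
  \<open>a = exp (- A T) / (1 - p)\<close>, which no longer involves I. Hence on \<open>[n T, (n + 1) T]\<close>
  S is dominated by the logistic solution starting at \<open>1 / w n\<close>, whose integral over the period is
  \<open>A T + ln (1 - p) + ln (w (n + 1) / w n)\<close>. Integrating \<open>(ln I)' = \<beta>0 S - (\<sigma> + g)\<close> then shows
  that \<open>ln I (n T) - \<beta>0 ln (w n)\<close> drops by at least \<open>(\<sigma> + g) T - \<beta>0 (A T + ln (1 - p))\<close> per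
  period, which is positive exactly when \<open>R\<^sub>p < 1\<close>, as \<open>A T + ln (1 - p)\<close> is the integral of
  the periodic solution. Since \<open>ln (w n)\<close> grows at most linearly, at a rate this margin absorbs,
  I decays exponentially at the impulse times, and within a period \<open>ln I\<close> grows by at most
  \<open>\<beta>0 A T\<close>.
\<close>

lemma linear_ode_eq_exp_integral:
  fixes y c :: "real \<Rightarrow> real"
  assumes "a \<le> t" "continuous_on {a..t} y" "continuous_on {a..t} c"
    and "\<And>x. a < x \<Longrightarrow> x < t \<Longrightarrow> (y has_real_derivative c x * y x) (at x)"
  shows "y t = y a * exp (integral {a..t} c)"
proof -
  define G where "G x = integral {a..x} c" for x
  have G_deriv: "(G has_real_derivative c x) (at x within {a..t})" if "x \<in> {a..t}" for x
    unfolding G_def by (rule integral_has_real_derivative[OF assms(3) that])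
  have "continuous_on {a..t} G"
    using G_deriv by (meson DERIV_continuous continuous_on_eq_continuous_within)
  then have cont: "continuous_on {a..t} (\<lambda>x. y x * exp (- G x))"
    by (intro continuous_intros assms(2))
  have "y t * exp (- G t) = y a * exp (- G a)"
  proof (cases "a = t")
    case False
    show ?thesis
    proof (rule DERIV_isconst_end[of a t "\<lambda>x. y x * exp (- G x)"])
      fix x assume x: "a < x" "x < t"
      have "(G has_real_derivative c x) (at x)"
        using G_deriv[of x] x at_within_Icc_at[of a x t] by simp
      with assms(4)[OF x] show "((\<lambda>x. y x * exp (- G x)) has_real_derivative 0) (at x)"
        by (auto intro!: derivative_eq_intros simp: algebra_simps)
    qed (use assms(1) False cont in auto)
  qed simp
  then show ?thesis by (simp add: G_def exp_minus field_simps)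
qed

lemma linear_ode_lower_bound:
  fixes y c :: "real \<Rightarrow> real"
  assumes "a \<le> t" "continuous_on {a..t} y" "continuous_on {a..t} c"
    and "\<And>x. a < x \<Longrightarrow> x < t \<Longrightarrow> (y has_real_derivative c x * y x) (at x)"
    and "\<And>x. x \<in> {a..t} \<Longrightarrow> - k \<le> c x" and "0 \<le> y a"
  shows "y a * exp (- k * (t - a)) \<le> y t"
proof -
  have "integral {a..t} (\<lambda>_. - k) \<le> integral {a..t} c"
    using assms(3,5) by (intro integral_le integrable_continuous_real) auto
  then have "- k * (t - a) \<le> integral {a..t} c"
    using assms(1) by (simp add: mult.commute)
  then have "y a * exp (- k * (t - a)) \<le> y a * exp (integral {a..t} c)"
    using assms(6) by (intro mult_left_mono) auto
  then show ?thesis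
    using linear_ode_eq_exp_integral[OF assms(1-4)] by simp
qed

lemma ln_le_of_log_deriv_le:
  fixes y c H h :: "real \<Rightarrow> real"
  assumes "a \<le> b" "continuous_on {a..b} y" "\<And>x. x \<in> {a..b} \<Longrightarrow> 0 < y x"
    and "continuous_on {a..b} H"
    and "\<And>x. a < x \<Longrightarrow> x < b \<Longrightarrow> (y has_real_derivative c x * y x) (at x)"
    and "\<And>x. a < x \<Longrightarrow> x < b \<Longrightarrow> (H has_real_derivative h x) (at x)"
    and "\<And>x. a < x \<Longrightarrow> x < b \<Longrightarrow> c x \<le> h x"
  shows "ln (y b) - ln (y a) \<le> H b - H a"
proof -
  have "ln (y b) - H b \<le> ln (y a) - H a"
  proof (rule DERIV_nonpos_imp_decreasing_open[OF assms(1)])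
    show "continuous_on {a..b} (\<lambda>x. ln (y x) - H x)"
      using assms(3) by (intro continuous_intros assms(2,4)) force
    fix x assume x: "a < x" "x < b"
    have "0 < y x" using assms(3) x by simp
    then have "((\<lambda>x. ln (y x) - H x) has_real_derivative c x - h x) (at x)"
      using assms(5,6)[OF x] by (auto intro!: derivative_eq_intros)
    then show "\<exists>d. ((\<lambda>x. ln (y x) - H x) has_real_derivative d) (at x) \<and> d \<le> 0"
      using assms(7)[OF x] by auto
  qed
  then show ?thesis by simp
qed

lemma continuous_on_Icc_if_isCont:
  fixes f :: "real \<Rightarrow> real"
  assumes "continuous (at_right a) f" "\<And>x. a < x \<Longrightarrow> x < b \<Longrightarrow> isCont f x"
    and "a < b \<Longrightarrow> isCont f b"
  shows "continuous_on {a..b} f"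
proof (cases "a < b")
  case True
  show ?thesis
  proof (rule continuous_on_IccI[OF _ _ _ True])
    show "(f \<longlongrightarrow> f a) (at_right a)" using assms(1) by (simp add: continuous_within)
    show "(f \<longlongrightarrow> f b) (at_left b)"
      using assms(3)[OF True] by (simp add: isCont_def filterlim_at_split)
    show "f \<midarrow>x\<rightarrow> f x" if "a < x" "x < b" for x
      using assms(2)[OF that] by (simp add: isCont_def)
  qed
next
  case False
  then have "{a..b} = {} \<or> {a..b} = {a}" by auto
  then show ?thesis by auto
qed

lemma not_multiple_between:
  fixes T :: real
  assumes "real n * T < x" "x < real (Suc n) * T" "0 < T"
  shows "x \<noteq> real k * T"
proof
  assume "x = real k * T"
  then have "n < k" "k < Suc n" using assms by (simp_all only: mult_less_cancel_right_pos of_nat_less_iff)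
  then show False by simp
qed

lemma period_containing:
  fixes T t :: real
  assumes "0 \<le> t" "0 < T"
  obtains n where "real n * T \<le> t" "t < real (Suc n) * T"
proof
  define n where "n = nat \<lfloor>t / T\<rfloor>"
  have "real n = of_int \<lfloor>t / T\<rfloor>" unfolding n_def using assms by simp
  then have "real n \<le> t / T" "t / T < real n + 1" by linarith+
  then show "real n * T \<le> t" "t < real (Suc n) * T"
    using assms by (simp_all add: field_simps)
qed

lemma tendsto_exp_linear_at_top:
  fixes K \<delta> :: real
  assumes "0 < \<delta>"
  shows "((\<lambda>t. exp (K - \<delta> * t)) \<longlongrightarrow> 0) at_top"
proof -
  have "filterlim (\<lambda>t. - K + \<delta> * t) at_top at_top"
    by (rule filterlim_tendsto_add_at_top[OF tendsto_const
          filterlim_tendsto_pos_mult_at_top[OF tendsto_const assms filterlim_ident]])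
  then have "filterlim (\<lambda>t. K - \<delta> * t) at_bot at_top"
    by (simp add: filterlim_uminus_at_bot)
  then show ?thesis by (rule filterlim_compose[OF exp_at_bot])
qed

text \<open>\<open>1 / logistic_recip A (1 / s\<^sub>0)\<close> solves \<open>s' = s (A - s)\<close>, \<open>s (0) = s\<^sub>0\<close>, and
  \<open>ln (exp (A t) * logistic_recip A \<rho> t)\<close> is an antiderivative of \<open>1 / logistic_recip A \<rho> t\<close>.\<close>

definition logistic_recip :: "real \<Rightarrow> real \<Rightarrow> real \<Rightarrow> real" where
  "logistic_recip A \<rho> s = \<rho> * exp (- (A * s)) + (1 - exp (- (A * s))) / A"

lemma logistic_recip_0 [simp]: "logistic_recip A \<rho> 0 = \<rho>"
  by (simp add: logistic_recip_def)

lemma logistic_recip_mono: "\<rho> \<le> \<rho>' \<Longrightarrow> logistic_recip A \<rho> s \<le> logistic_recip A \<rho>' s"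
  by (simp add: logistic_recip_def)

lemma logistic_recip_pos:
  assumes "0 < A" "0 < \<rho>" "0 \<le> s"
  shows "0 < logistic_recip A \<rho> s"
proof -
  have "exp (- (A * s)) \<le> 1" using assms by simp
  then show ?thesis
    unfolding logistic_recip_def using assms by (intro add_pos_nonneg) auto
qed

lemma exp_mult_logistic_recip:
  assumes "0 < A"
  shows "exp (A * s) * logistic_recip A \<rho> s = \<rho> + (exp (A * s) - 1) / A"
  using assms by (simp add: logistic_recip_def exp_minus field_simps)

lemma has_real_derivative_ln_exp_mult_logistic_recip:
  assumes "0 < A" "0 < \<rho>" "c \<le> x"
  shows "((\<lambda>x. ln (exp (A * (x - c)) * logistic_recip A \<rho> (x - c))) has_real_derivative
           1 / logistic_recip A \<rho> (x - c)) (at x)"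
proof -
  have Q_pos: "0 < logistic_recip A \<rho> (x - c)"
    using assms by (intro logistic_recip_pos) auto
  then have pos: "0 < \<rho> + (exp (A * (x - c)) - 1) / A"
    using exp_mult_logistic_recip[OF assms(1)] by (metis exp_gt_zero mult_pos_pos)
  have "((\<lambda>x. ln (\<rho> + (exp (A * (x - c)) - 1) / A)) has_real_derivative
          exp (A * (x - c)) * A / A / (\<rho> + (exp (A * (x - c)) - 1) / A)) (at x)"
    using pos by (auto intro!: derivative_eq_intros)
  moreover have "exp (A * (x - c)) * A / A / (\<rho> + (exp (A * (x - c)) - 1) / A)
      = 1 / logistic_recip A \<rho> (x - c)"
    using assms(1) Q_pos exp_mult_logistic_recip[OF assms(1), of "x - c" \<rho>, symmetric] by simp
  ultimately show ?thesis by (simp add: exp_mult_logistic_recip[OF assms(1)])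
qed

lemma logistic_comparison:
  fixes y d :: "real \<Rightarrow> real"
  assumes "0 < A" "a \<le> t" "continuous_on {a..t} y" "\<And>x. x \<in> {a..t} \<Longrightarrow> 0 < y x"
    and "\<And>x. a < x \<Longrightarrow> x < t \<Longrightarrow> (y has_real_derivative d x) (at x)"
    and "\<And>x. a < x \<Longrightarrow> x < t \<Longrightarrow> d x \<le> y x * (A - y x)"
  shows "logistic_recip A (1 / y a) (t - a) \<le> 1 / y t"
proof -
  define G where "G x = exp (A * (x - a)) * (1 / y x - 1 / A)" for x
  have "G a \<le> G t"
  proof (rule DERIV_nonneg_imp_increasing_open[OF assms(2)])
    show "continuous_on {a..t} G"
      unfolding G_def using assms(4) by (intro continuous_intros assms(3)) force
    fix x assume x: "a < x" "x < t"
    have yx: "y x \<noteq> 0" using assms(4)[of x] x by simp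
    have "(G has_real_derivative
        exp (A * (x - a)) * A * (1 / y x - 1 / A) - exp (A * (x - a)) * (d x / (y x * y x))) (at x)"
      unfolding G_def using assms(5)[OF x] yx by (auto intro!: derivative_eq_intros simp: power2_eq_square)
    moreover have "exp (A * (x - a)) * A * (1 / y x - 1 / A) - exp (A * (x - a)) * (d x / (y x * y x))
        = exp (A * (x - a)) * (y x * (A - y x) - d x) / (y x * y x)"
      using yx assms(1) by (simp add: field_simps)
    moreover have "0 \<le> exp (A * (x - a)) * (y x * (A - y x) - d x) / (y x * y x)"
      using assms(6)[OF x] by simp
    ultimately show "\<exists>D. (G has_real_derivative D) (at x) \<and> 0 \<le> D" by auto
  qed
  then have "(1 / y a - 1 / A) * exp (- (A * (t - a)))
      \<le> exp (A * (t - a)) * (1 / y t - 1 / A) * exp (- (A * (t - a)))"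
    unfolding G_def by (intro mult_right_mono) auto
  also have "\<dots> = 1 / y t - 1 / A" by (simp add: exp_minus)
  finally show ?thesis
    by (simp add: logistic_recip_def diff_divide_distrib algebra_simps)
qed

primrec affine_iter :: "real \<Rightarrow> real \<Rightarrow> real \<Rightarrow> nat \<Rightarrow> real" where
  "affine_iter a b x 0 = x"
| "affine_iter a b x (Suc n) = a * affine_iter a b x n + b"

lemma affine_iter_pos: "0 < a \<Longrightarrow> 0 \<le> b \<Longrightarrow> 0 < x \<Longrightarrow> 0 < affine_iter a b x n"
  by (induction n) (auto intro: add_pos_nonneg)

lemma affine_iter_le:
  assumes "0 \<le> a" "x \<le> y 0" "\<And>n. a * y n + b \<le> y (Suc n)"
  shows "affine_iter a b x n \<le> y n"
proof (induction n)
  case (Suc n)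
  then have "a * affine_iter a b x n + b \<le> a * y n + b"
    using assms(1) by (simp add: mult_left_mono)
  then show ?case using assms(3)[of n] by simp
qed (use assms(2) in simp)

lemma ln_affine_iter_le:
  assumes "0 < a" "0 \<le> b" "0 < x" "ln a \<le> r" "0 < r"
  obtains C where "\<And>n. ln (affine_iter a b x n) \<le> real n * r + C"
proof -
  define m where "m = exp r"
  have "1 < m" using assms(5) by (simp add: m_def)
  have "a \<le> m" using assms(1,4) unfolding m_def by (metis exp_le_cancel_iff exp_ln)
  define B where "B = b / (m - 1)"
  have B: "0 \<le> B" "b + B = m * B"
    unfolding B_def using \<open>1 < m\<close> assms(2) by (auto simp: field_simps)
  have geom: "affine_iter a b x n + B \<le> m ^ n * (x + B)" for n
  proof (induction n)
    case (Suc n)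
    have "a * affine_iter a b x n \<le> m * affine_iter a b x n"
      using \<open>a \<le> m\<close> affine_iter_pos[OF assms(1-3)] by (simp add: mult_right_mono less_imp_le)
    then have "affine_iter a b x (Suc n) + B \<le> m * (affine_iter a b x n + B)"
      using B by (simp add: algebra_simps)
    also have "\<dots> \<le> m * (m ^ n * (x + B))" using Suc \<open>1 < m\<close> by simp
    finally show ?case by simp
  qed simp
  show ?thesis
  proof
    fix n
    have "ln (affine_iter a b x n) \<le> ln (m ^ n * (x + B))"
      using geom[of n] B affine_iter_pos[OF assms(1-3), of n] assms(3) \<open>1 < m\<close> by simp
    also have "\<dots> = real n * r + ln (x + B)"
      using \<open>1 < m\<close> B assms(3) by (simp add: ln_mult ln_realpow m_def)
    finally show "ln (affine_iter a b x n) \<le> real n * r + ln (x + B)" .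
  qed
qed

lemma integral_Sper:
  fixes A p T :: real
  assumes "0 < A" "0 \<le> p" "p < 1" "0 < T"
  shows "integral {0..T} (Sper A p T) = A * T + ln (1 - p)"
proof -
  define D where "D t = exp (A * T) * (1 - p) - 1 + p * exp (A * (T - t))" for t
  have eAT: "1 < exp (A * T)" using assms by simp
  have D_pos: "0 < D t" if "t \<le> T" for t
  proof -
    have "1 \<le> exp (A * (T - t))" using that assms by simp
    then have "p \<le> p * exp (A * (T - t))" using mult_left_mono[OF _ assms(2)] by fastforce
    moreover have "0 < (1 - p) * (exp (A * T) - 1)" using eAT assms by simp
    ultimately show ?thesis unfolding D_def by (simp add: algebra_simps)
  qed
  have "(Sper A p T has_integral (A * T + ln (D T)) - (A * 0 + ln (D 0))) {0..T}"
  proof (rule fundamental_theorem_of_calculus)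
    fix t assume t: "t \<in> {0..T}"
    then have "((\<lambda>t. A * t + ln (D t)) has_real_derivative
        A + (- (p * (exp (A * (T - t)) * A))) / D t) (at t within {0..T})"
      using D_pos[of t] unfolding D_def by (auto intro!: derivative_eq_intros)
    moreover have "A + (- (p * (exp (A * (T - t)) * A))) / D t = Sper A p T t"
      using D_pos[of t] t unfolding Sper_def D_def by (simp add: field_simps)
    ultimately show "((\<lambda>t. A * t + ln (D t)) has_vector_derivative Sper A p T t) (at t within {0..T})"
      by (simp add: has_real_derivative_iff_has_vector_derivative)
  qed (use assms in simp)
  moreover have "D T = (1 - p) * (exp (A * T) - 1)" "D 0 = exp (A * T) - 1"
    unfolding D_def by (simp_all add: algebra_simps)
  ultimately show ?thesis
    using eAT assms by (simp add: integral_unique ln_mult)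
qed

locale pulse_SI =
  fixes A \<beta>0 \<sigma> g p T :: real and S I :: "real \<Rightarrow> real"
  assumes A_pos: "0 < A" and \<beta>0_pos: "0 < \<beta>0" and removal_pos: "0 < \<sigma> + g"
    and p_less_1: "p < 1" and T_pos: "0 < T"
    and solution: "impulsive_solution A \<beta>0 \<sigma> g p T S I"
    and S_0_pos: "0 < S 0" and I_0_pos: "0 < I 0"
    and S_le_A: "\<And>t. 0 \<le> t \<Longrightarrow> S t \<le> A"
begin

lemma impulse_time_nonneg: "0 \<le> real n * T"
  using T_pos by simp

lemma impulse_time_less: "real n * T < real (Suc n) * T"
  using T_pos by simp

lemma period_length: "real (Suc n) * T - real n * T = T"
  by (simp add: algebra_simps)

lemma S_I_deriv:
  assumes "real n * T < x" "x < real (Suc n) * T"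
  shows "(S has_real_derivative (A - S x - \<beta>0 * I x) * S x) (at x)"
    and "(I has_real_derivative (\<beta>0 * S x - (\<sigma> + g)) * I x) (at x)"
proof -
  have "0 < x" using assms(1) impulse_time_nonneg[of n] by linarith
  moreover have "\<forall>k::nat. x \<noteq> real k * T" using not_multiple_between[OF assms T_pos] by blast
  ultimately have "(S has_real_derivative S x * (A - S x) - \<beta>0 * I x * S x) (at x)"
    "(I has_real_derivative \<beta>0 * I x * S x - (\<sigma> + g) * I x) (at x)"
    using solution unfolding impulsive_solution_def by auto
  then show "(S has_real_derivative (A - S x - \<beta>0 * I x) * S x) (at x)"
    "(I has_real_derivative (\<beta>0 * S x - (\<sigma> + g)) * I x) (at x)"
    by (simp_all add: algebra_simps)
qed

lemma S_continuous_on: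
  assumes "real n * T \<le> t" "t < real (Suc n) * T"
  shows "continuous_on {real n * T..t} S"
proof (rule continuous_on_Icc_if_isCont)
  show "continuous (at_right (real n * T)) S"
    using solution unfolding impulsive_solution_def by blast
  show "isCont S x" if "real n * T < x" "x < t" for x
    using DERIV_isCont[OF S_I_deriv(1)[of n x]] that assms by simp
  show "isCont S t" if "real n * T < t"
    using DERIV_isCont[OF S_I_deriv(1)[of n t]] that assms by simp
qed

lemma I_continuous_on: "continuous_on {real n * T..real (Suc n) * T} I"
proof (rule continuous_on_Icc_if_isCont)
  have isCont_I: "isCont I (real k * T)" if "1 \<le> k" for k
    using solution that unfolding impulsive_solution_def by blast
  show "continuous (at_right (real n * T)) I"
  proof (cases "n = 0")
    case True
    then show ?thesis using solution unfolding impulsive_solution_def by simp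
  next
    case False
    then show ?thesis using isCont_I[of n] by (simp add: continuous_at_imp_continuous_at_within)
  qed
  show "isCont I (real (Suc n) * T)"
    using isCont_I[of "Suc n"] by simp
  show "isCont I x" if "real n * T < x" "x < real (Suc n) * T" for x
    using DERIV_isCont[OF S_I_deriv(2)[OF that]] .
qed

lemma S_jump:
  obtains L where "(S \<longlongrightarrow> L) (at_left (real (Suc n) * T))" "S (real (Suc n) * T) = (1 - p) * L"
  using solution unfolding impulsive_solution_def by (metis le_add1 plus_1_eq_Suc)

lemma S_lower_bound_on_period:
  assumes "0 \<le> S (real n * T)"
  obtains m where
    "\<And>t. real n * T \<le> t \<Longrightarrow> t < real (Suc n) * T \<Longrightarrow> S (real n * T) * exp (- m) \<le> S t"
proof -
  obtain B where B: "\<forall>x\<in>{real n * T..real (Suc n) * T}. \<bar>I x\<bar> \<le> B" "0 < B"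
    using compact_imp_bounded[OF compact_continuous_image[OF I_continuous_on compact_Icc]]
    unfolding bounded_pos by auto
  show ?thesis
  proof
    fix t assume t: "real n * T \<le> t" "t < real (Suc n) * T"
    have "S (real n * T) * exp (- (\<beta>0 * B) * (t - real n * T)) \<le> S t"
    proof (rule linear_ode_lower_bound[OF t(1) S_continuous_on[OF t]])
      show "continuous_on {real n * T..t} (\<lambda>x. A - S x - \<beta>0 * I x)"
        using continuous_on_subset[OF I_continuous_on[of n], of "{real n * T..t}"] t
        by (intro continuous_intros S_continuous_on) auto
      show "(S has_real_derivative (A - S x - \<beta>0 * I x) * S x) (at x)"
        if "real n * T < x" "x < t" for x
        using that t by (intro S_I_deriv(1)) auto
      show "- (\<beta>0 * B) \<le> A - S x - \<beta>0 * I x" if "x \<in> {real n * T..t}" for x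
      proof -
        have "S x \<le> A" using that impulse_time_nonneg[of n] by (intro S_le_A) auto
        moreover have "\<bar>I x\<bar> \<le> B" using B(1) that t by simp
        then have "\<beta>0 * I x \<le> \<beta>0 * B" using \<beta>0_pos by (simp add: abs_le_iff)
        ultimately show ?thesis by linarith
      qed
    qed (use assms in simp)
    moreover have "\<beta>0 * B * (t - real n * T) \<le> \<beta>0 * B * T"
      using t period_length[of n] \<beta>0_pos B(2) by (intro mult_left_mono) auto
    then have "exp (- (\<beta>0 * B * T)) \<le> exp (- (\<beta>0 * B) * (t - real n * T))"
      by simp
    ultimately show "S (real n * T) * exp (- (\<beta>0 * B * T)) \<le> S t"
      using assms by (meson mult_left_mono order_trans)
  qed
qed

lemma S_pos_at_impulses: "0 < S (real n * T)"
proof (induction n)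
  case (Suc n)
  obtain m where m: "\<And>t. real n * T \<le> t \<Longrightarrow> t < real (Suc n) * T \<Longrightarrow> S (real n * T) * exp (- m) \<le> S t"
    using S_lower_bound_on_period Suc.IH by (metis less_imp_le)
  obtain L where L: "(S \<longlongrightarrow> L) (at_left (real (Suc n) * T))" "S (real (Suc n) * T) = (1 - p) * L"
    using S_jump .
  have "S (real n * T) * exp (- m) \<le> L"
  proof (rule tendsto_lowerbound[OF L(1)])
    show "\<forall>\<^sub>F t in at_left (real (Suc n) * T). S (real n * T) * exp (- m) \<le> S t"
      using eventually_at_left_real[OF impulse_time_less] by eventually_elim (auto intro: m)
  qed simp
  then have "0 < L" using Suc.IH by (meson exp_gt_zero less_le_trans mult_pos_pos)
  then show ?case using L(2) p_less_1 by simp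
qed (use S_0_pos in simp)

lemma S_pos: "0 \<le> t \<Longrightarrow> 0 < S t"
proof -
  assume "0 \<le> t"
  then obtain n where n: "real n * T \<le> t" "t < real (Suc n) * T"
    using period_containing T_pos by blast
  obtain m where "S (real n * T) * exp (- m) \<le> S t"
    using S_lower_bound_on_period[of n] S_pos_at_impulses[of n] n by (metis less_imp_le)
  then show "0 < S t" using S_pos_at_impulses[of n] by (meson exp_gt_zero less_le_trans mult_pos_pos)
qed

lemma I_lower_bound_on_period:
  assumes "0 \<le> I (real n * T)" "real n * T \<le> t" "t \<le> real (Suc n) * T"
  shows "I (real n * T) * exp (- (\<sigma> + g) * (t - real n * T)) \<le> I t"
proof -
  have inner: "I (real n * T) * exp (- (\<sigma> + g) * (t - real n * T)) \<le> I t"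
    if t: "real n * T \<le> t" "t < real (Suc n) * T" for t
  proof (rule linear_ode_lower_bound[OF t(1)])
    have sub: "{real n * T..t} \<subseteq> {real n * T..real (Suc n) * T}" using t by auto
    show "continuous_on {real n * T..t} I"
      using continuous_on_subset[OF I_continuous_on[of n] sub] .
    show "continuous_on {real n * T..t} (\<lambda>x. \<beta>0 * S x - (\<sigma> + g))"
      by (intro continuous_intros S_continuous_on t)
    show "(I has_real_derivative (\<beta>0 * S x - (\<sigma> + g)) * I x) (at x)"
      if "real n * T < x" "x < t" for x
      using that t by (intro S_I_deriv(2)) auto
    show "- (\<sigma> + g) \<le> \<beta>0 * S x - (\<sigma> + g)" if "x \<in> {real n * T..t}" for x
      using S_pos[of x] that impulse_time_nonneg[of n] \<beta>0_pos by simp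
  qed (use assms in simp)
  show ?thesis
  proof (cases "t < real (Suc n) * T")
    case False
    then have t: "t = real (Suc n) * T" using assms by simp
    let ?lb = "\<lambda>t. I (real n * T) * exp (- (\<sigma> + g) * (t - real n * T))"
    have "(I \<longlongrightarrow> I t) (at_left t)"
      using continuous_on_Icc_at_leftD[OF I_continuous_on impulse_time_less] t by simp
    moreover have "(?lb \<longlongrightarrow> ?lb t) (at_left t)"
      by (intro tendsto_intros)
    moreover have "\<forall>\<^sub>F x in at_left t. ?lb x \<le> I x"
      using eventually_at_left_real[OF impulse_time_less] unfolding t
      by eventually_elim (rule inner, auto)
    ultimately show ?thesis by (intro tendsto_le[of "at_left t"]) auto
  qed (use inner assms in auto)
qed

lemma I_pos_at_impulses: "0 < I (real n * T)"
proof (induction n)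
  case (Suc n)
  then show ?case
    using I_lower_bound_on_period[of n "real (Suc n) * T"] impulse_time_less[of n]
    by (meson exp_gt_zero less_imp_le less_le_trans mult_pos_pos order_refl)
qed (use I_0_pos in simp)

lemma I_pos: "0 \<le> t \<Longrightarrow> 0 < I t"
proof -
  assume "0 \<le> t"
  then obtain n where n: "real n * T \<le> t" "t < real (Suc n) * T"
    using period_containing T_pos by blast
  then show "0 < I t"
    using I_lower_bound_on_period[of n t] I_pos_at_impulses[of n]
    by (meson exp_gt_zero less_imp_le less_le_trans mult_pos_pos)
qed

lemma inverse_S_lower_bound_on_period:
  assumes "real n * T \<le> t" "t < real (Suc n) * T"
  shows "logistic_recip A (1 / S (real n * T)) (t - real n * T) \<le> 1 / S t"
proof (rule logistic_comparison[OF A_pos assms(1) S_continuous_on[OF assms]])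
  show "0 < S x" if "x \<in> {real n * T..t}" for x
    using that impulse_time_nonneg[of n] by (intro S_pos) auto
  show "(S has_real_derivative (A - S x - \<beta>0 * I x) * S x) (at x)"
    if "real n * T < x" "x < t" for x
    using that assms by (intro S_I_deriv(1)) auto
  show "(A - S x - \<beta>0 * I x) * S x \<le> S x * (A - S x)" if "real n * T < x" "x < t" for x
  proof -
    have "0 \<le> x" using that impulse_time_nonneg[of n] by linarith
    then have "0 \<le> \<beta>0 * I x * S x" using I_pos S_pos \<beta>0_pos by (simp add: less_imp_le)
    then show ?thesis by (simp add: algebra_simps)
  qed
qed

lemma inverse_S_lower_bound_at_impulse:
  "logistic_recip A (1 / S (real n * T)) T \<le> (1 - p) / S (real (Suc n) * T)"
proof -
  define Q where "Q t = logistic_recip A (1 / S (real n * T)) (t - real n * T)" for t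
  obtain L where L: "(S \<longlongrightarrow> L) (at_left (real (Suc n) * T))" "S (real (Suc n) * T) = (1 - p) * L"
    using S_jump .
  have "isCont Q (real (Suc n) * T)"
    unfolding Q_def logistic_recip_def by (intro continuous_intros) (use A_pos in simp)
  then have "((\<lambda>t. S t * Q t) \<longlongrightarrow> L * Q (real (Suc n) * T)) (at_left (real (Suc n) * T))"
    by (intro tendsto_mult L(1)) (simp add: isCont_def filterlim_at_split)
  moreover have "\<forall>\<^sub>F t in at_left (real (Suc n) * T). S t * Q t \<le> 1"
    using eventually_at_left_real[OF impulse_time_less]
  proof eventually_elim
    case (elim t)
    then have "0 < S t" using impulse_time_nonneg[of n] by (intro S_pos) auto
    with elim show ?case
      using inverse_S_lower_bound_on_period[of n t] by (simp add: Q_def field_simps)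
  qed
  ultimately have "L * Q (real (Suc n) * T) \<le> 1"
    by (intro tendsto_upperbound) auto
  then have "S (real (Suc n) * T) * Q (real (Suc n) * T) \<le> 1 - p"
    using L(2) p_less_1 mult_left_mono[of _ 1 "1 - p"] by (simp add: mult.assoc)
  then show ?thesis
    using S_pos_at_impulses[of "Suc n"] by (simp add: Q_def period_length field_simps)
qed

definition inv_S_minorant :: "nat \<Rightarrow> real" where
  "inv_S_minorant = affine_iter (exp (- (A * T)) / (1 - p)) ((1 - exp (- (A * T))) / (A * (1 - p))) (1 / S 0)"

lemma inv_S_minorant_pos: "0 < inv_S_minorant n"
  unfolding inv_S_minorant_def using A_pos T_pos p_less_1 S_0_pos
  by (intro affine_iter_pos) auto

lemma logistic_recip_period: 
  "logistic_recip A \<rho> T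
     = (1 - p) * (exp (- (A * T)) / (1 - p) * \<rho> + (1 - exp (- (A * T))) / (A * (1 - p)))"
proof -
  have "(1 - p) * (e / (1 - p) * \<rho> + (1 - e) / (A * (1 - p))) = \<rho> * e + (1 - e) / A" for e
    using p_less_1 by (simp add: distrib_left)
  then show ?thesis by (simp add: logistic_recip_def)
qed

lemma logistic_recip_inv_S_minorant:
  "logistic_recip A (inv_S_minorant n) T = (1 - p) * inv_S_minorant (Suc n)"
  unfolding logistic_recip_period by (simp add: inv_S_minorant_def)

lemma inv_S_minorant_le: "inv_S_minorant n \<le> 1 / S (real n * T)"
  unfolding inv_S_minorant_def
proof (rule affine_iter_le)
  fix k
  show "exp (- (A * T)) / (1 - p) * (1 / S (real k * T)) + (1 - exp (- (A * T))) / (A * (1 - p))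
      \<le> 1 / S (real (Suc k) * T)"
  proof -
    have "(1 - p) * (exp (- (A * T)) / (1 - p) * (1 / S (real k * T)) + (1 - exp (- (A * T))) / (A * (1 - p)))
        \<le> (1 - p) * (1 / S (real (Suc k) * T))"
      using inverse_S_lower_bound_at_impulse[of k] unfolding logistic_recip_period by simp
    then show ?thesis using p_less_1 by (simp only: mult_le_cancel_left_pos)
  qed
qed (use p_less_1 in auto)

lemma S_le_logistic_on_period:
  assumes "real n * T < x" "x < real (Suc n) * T"
  shows "S x \<le> 1 / logistic_recip A (inv_S_minorant n) (x - real n * T)"
proof -
  have "logistic_recip A (inv_S_minorant n) (x - real n * T)
      \<le> logistic_recip A (1 / S (real n * T)) (x - real n * T)"
    using inv_S_minorant_le by (rule logistic_recip_mono)
  also have "\<dots> \<le> 1 / S x"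
    using assms by (intro inverse_S_lower_bound_on_period) auto
  finally show ?thesis
    using logistic_recip_pos[OF A_pos inv_S_minorant_pos, of "x - real n * T"]
      S_pos[of x] assms impulse_time_nonneg[of n]
    by (simp add: le_divide_eq divide_le_eq mult.commute)
qed

lemma ln_I_impulse_step:
  "ln (I (real (Suc n) * T)) - \<beta>0 * ln (inv_S_minorant (Suc n))
     \<le> ln (I (real n * T)) - \<beta>0 * ln (inv_S_minorant n) + (\<beta>0 * (A * T + ln (1 - p)) - (\<sigma> + g) * T)"
proof -
  define c where "c = real n * T"
  define W where "W = inv_S_minorant n"
  define H where "H x = \<beta>0 * ln (exp (A * (x - c)) * logistic_recip A W (x - c)) - (\<sigma> + g) * x" for x
  have H_deriv: "(H has_real_derivative \<beta>0 * (1 / logistic_recip A W (x - c)) - (\<sigma> + g) * 1) (at x)"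
    if "c \<le> x" for x
    unfolding H_def W_def
    by (intro DERIV_diff DERIV_cmult DERIV_ident
        has_real_derivative_ln_exp_mult_logistic_recip A_pos inv_S_minorant_pos that)
  have "ln (I (real (Suc n) * T)) - ln (I c) \<le> H (real (Suc n) * T) - H c"
  proof (rule ln_le_of_log_deriv_le[where c = "\<lambda>x. \<beta>0 * S x - (\<sigma> + g)"])
    show "c \<le> real (Suc n) * T" "continuous_on {c..real (Suc n) * T} I"
      unfolding c_def using impulse_time_less I_continuous_on by (auto intro: less_imp_le)
    show "0 < I x" if "x \<in> {c..real (Suc n) * T}" for x
      using that impulse_time_nonneg[of n] by (intro I_pos) (auto simp: c_def)
    show "continuous_on {c..real (Suc n) * T} H"
      using DERIV_isCont[OF H_deriv] by (intro continuous_at_imp_continuous_on) simp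
    show "(I has_real_derivative (\<beta>0 * S x - (\<sigma> + g)) * I x) (at x)"
      if "c < x" "x < real (Suc n) * T" for x
      using that by (intro S_I_deriv(2)) (auto simp: c_def)
    show "(H has_real_derivative \<beta>0 * (1 / logistic_recip A W (x - c)) - (\<sigma> + g) * 1) (at x)"
      if "c < x" "x < real (Suc n) * T" for x
      using that by (intro H_deriv) simp
    show "\<beta>0 * S x - (\<sigma> + g) \<le> \<beta>0 * (1 / logistic_recip A W (x - c)) - (\<sigma> + g) * 1"
      if "c < x" "x < real (Suc n) * T" for x
      using mult_left_mono[OF S_le_logistic_on_period, of n x \<beta>0] that \<beta>0_pos
      unfolding c_def W_def by simp
  qed
  moreover have "H (real (Suc n) * T)
      = \<beta>0 * (A * T + ln (1 - p) + ln (inv_S_minorant (Suc n))) - (\<sigma> + g) * (real (Suc n) * T)"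
    unfolding H_def c_def period_length W_def logistic_recip_inv_S_minorant
    using p_less_1 inv_S_minorant_pos[of "Suc n"] by (simp add: ln_mult)
  moreover have "H c = \<beta>0 * ln W - (\<sigma> + g) * c"
    unfolding H_def by simp
  moreover have "(\<sigma> + g) * (real (Suc n) * T) = (\<sigma> + g) * c + (\<sigma> + g) * T"
    unfolding c_def by (simp add: algebra_simps)
  ultimately show ?thesis unfolding c_def W_def by (simp add: algebra_simps)
qed

lemma ln_I_at_impulses:
  "ln (I (real n * T)) - \<beta>0 * ln (inv_S_minorant n)
     \<le> ln (I 0) - \<beta>0 * ln (inv_S_minorant 0) + real n * (\<beta>0 * (A * T + ln (1 - p)) - (\<sigma> + g) * T)"
proof (induction n)
  case (Suc n)
  then show ?case using ln_I_impulse_step[of n] by (simp add: algebra_simps)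
qed simp

lemma ln_I_within_period:
  assumes "real n * T \<le> t" "t < real (Suc n) * T"
  shows "ln (I t) \<le> ln (I (real n * T)) + \<beta>0 * A * T"
proof -
  have "ln (I t) - ln (I (real n * T)) \<le> \<beta>0 * A * t - \<beta>0 * A * (real n * T)"
  proof (rule ln_le_of_log_deriv_le[where c = "\<lambda>x. \<beta>0 * S x - (\<sigma> + g)" and h = "\<lambda>_. \<beta>0 * A"])
    show "continuous_on {real n * T..t} I"
      using assms by (intro continuous_on_subset[OF I_continuous_on[of n]]) auto
    show "0 < I x" if "x \<in> {real n * T..t}" for x
      using that impulse_time_nonneg[of n] by (intro I_pos) auto
    show "(I has_real_derivative (\<beta>0 * S x - (\<sigma> + g)) * I x) (at x)"
      if "real n * T < x" "x < t" for x
      using that assms by (intro S_I_deriv(2)) auto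
    show "\<beta>0 * S x - (\<sigma> + g) \<le> \<beta>0 * A" if "real n * T < x" "x < t" for x
    proof -
      have "S x \<le> A" using that impulse_time_nonneg[of n] by (intro S_le_A) auto
      then have "\<beta>0 * S x \<le> \<beta>0 * A" using \<beta>0_pos by simp
      then show ?thesis using removal_pos by linarith
    qed
    show "continuous_on {real n * T..t} (\<lambda>x. \<beta>0 * A * x)"
      by (intro continuous_intros)
  qed (use assms in \<open>auto intro!: derivative_eq_intros\<close>)
  moreover have "\<beta>0 * A * (t - real n * T) \<le> \<beta>0 * A * T"
    using assms period_length[of n] \<beta>0_pos A_pos by (intro mult_left_mono) auto
  ultimately show ?thesis by (simp add: algebra_simps)
qed

lemma ln_I_at_impulses_decay:
  assumes "\<beta>0 * (A * T + ln (1 - p)) < (\<sigma> + g) * T"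
  obtains \<epsilon> C where "0 < \<epsilon>" "\<And>n. ln (I (real n * T)) \<le> C - real n * \<epsilon>"
proof -
  define \<Phi> where "\<Phi> = A * T + ln (1 - p)"
  define \<epsilon> where "\<epsilon> = ((\<sigma> + g) * T - \<beta>0 * max \<Phi> 0) / 2"
  have \<epsilon>_pos: "0 < \<epsilon>"
    using assms removal_pos T_pos unfolding \<epsilon>_def \<Phi>_def by (simp add: max_def)
  (* For \<Phi> < 0 the minorant grows like exp (- \<Phi> n), so r must exceed - \<Phi>; the margin
     in R_p < 1 pays for the slack \<epsilon> / \<beta>0. *)
  define r where "r = max (- \<Phi>) 0 + \<epsilon> / \<beta>0"
  have "ln (exp (- (A * T)) / (1 - p)) = - \<Phi>"
    using p_less_1 by (simp add: \<Phi>_def ln_div)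
  moreover have "0 < \<epsilon> / \<beta>0" using \<epsilon>_pos \<beta>0_pos by simp
  ultimately have "ln (exp (- (A * T)) / (1 - p)) \<le> r" "0 < r"
    unfolding r_def by (simp_all add: max_def)
  moreover have "0 < exp (- (A * T)) / (1 - p)" "0 \<le> (1 - exp (- (A * T))) / (A * (1 - p))"
    using A_pos T_pos p_less_1 by auto
  ultimately obtain C where C: "\<And>n. ln (inv_S_minorant n) \<le> real n * r + C"
    using ln_affine_iter_le[of _ _ "1 / S 0" r] S_0_pos unfolding inv_S_minorant_def by auto
  have rate: "\<beta>0 * \<Phi> - (\<sigma> + g) * T + \<beta>0 * r = - \<epsilon>"
    using \<beta>0_pos unfolding r_def \<epsilon>_def by (auto simp: max_def field_simps)
  show ?thesis
  proof
    show "0 < \<epsilon>" by (rule \<epsilon>_pos)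
    fix n
    have "\<beta>0 * ln (inv_S_minorant n) \<le> \<beta>0 * (real n * r + C)"
      using C[of n] \<beta>0_pos by simp
    moreover have "real n * (\<beta>0 * \<Phi> - (\<sigma> + g) * T) + \<beta>0 * (real n * r)
        = real n * (\<beta>0 * \<Phi> - (\<sigma> + g) * T + \<beta>0 * r)"
      by (simp add: algebra_simps)
    ultimately show "ln (I (real n * T)) \<le> ln (I 0) - \<beta>0 * ln (inv_S_minorant 0) + \<beta>0 * C - real n * \<epsilon>"
      using ln_I_at_impulses[of n] unfolding rate \<Phi>_def[symmetric] by (simp add: algebra_simps)
  qed
qed

lemma I_exponential_decay:
  assumes "\<beta>0 * (A * T + ln (1 - p)) < (\<sigma> + g) * T"
  obtains \<delta> K where "0 < \<delta>" "\<And>t. 0 \<le> t \<Longrightarrow> I t \<le> exp (K - \<delta> * t)"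
proof -
  obtain \<epsilon> C where "0 < \<epsilon>" and at_impulses: "\<And>n. ln (I (real n * T)) \<le> C - real n * \<epsilon>"
    using ln_I_at_impulses_decay[OF assms] by blast
  show ?thesis
  proof
    show "0 < \<epsilon> / T" using \<open>0 < \<epsilon>\<close> T_pos by simp
    fix t :: real assume "0 \<le> t"
    then obtain n where n: "real n * T \<le> t" "t < real (Suc n) * T"
      using period_containing T_pos by blast
    have "t / T < real n + 1"
      using n(2) T_pos by (simp add: divide_less_eq algebra_simps)
    then have "\<epsilon> * (t / T) < \<epsilon> * (real n + 1)"
      using \<open>0 < \<epsilon>\<close> by (simp only: mult_less_cancel_left_pos)
    then have "ln (I t) \<le> C + \<beta>0 * A * T + \<epsilon> - \<epsilon> / T * t"
      using ln_I_within_period[OF n] at_impulses[of n] by (simp add: algebra_simps)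
    then show "I t \<le> exp (C + \<beta>0 * A * T + \<epsilon> - \<epsilon> / T * t)"
      using I_pos[OF \<open>0 \<le> t\<close>] by (metis exp_le_cancel_iff exp_ln)
  qed
qed

end

theorem lemma10:
  fixes A \<beta>0 \<sigma> g p T :: real and S I :: "real \<Rightarrow> real"
  assumes "0 < A" "A \<le> 1" "0 < \<beta>0" "0 \<le> \<sigma>" "0 \<le> g" "0 < \<sigma> + g"
    and "0 \<le> p" "p < 1" "0 < T"
    and "impulsive_solution A \<beta>0 \<sigma> g p T S I"
    and "S 0 > 0" "I 0 > 0" "(S 0, I 0) \<in> regionM A \<sigma> g"
    and "\<forall>t\<ge>0. S t \<le> A"
    and "Rp A \<beta>0 \<sigma> g p T < 1"
  shows "(I \<longlongrightarrow> 0) at_top"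
proof -
  interpret pulse_SI A \<beta>0 \<sigma> g p T S I
    using assms by unfold_locales auto
  have "\<beta>0 * (A * T + ln (1 - p)) / ((\<sigma> + g) * T) < 1"
    using assms(15) integral_Sper[OF assms(1,7-9)] by (simp add: Rp_def)
  then have "\<beta>0 * (A * T + ln (1 - p)) < (\<sigma> + g) * T"
    using assms(6,9) by (simp add: divide_less_eq)
  then obtain \<delta> K where "0 < \<delta>" and bound: "\<And>t. 0 \<le> t \<Longrightarrow> I t \<le> exp (K - \<delta> * t)"
    by (rule I_exponential_decay) blast
  show ?thesis
  proof (rule tendsto_sandwich[of "\<lambda>_. 0" I at_top "\<lambda>t. exp (K - \<delta> * t)"])
    show "\<forall>\<^sub>F t in at_top. 0 \<le> I t"
      using eventually_ge_at_top[of 0] by eventually_elim (simp add: I_pos less_imp_le)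
    show "\<forall>\<^sub>F t in at_top. I t \<le> exp (K - \<delta> * t)"
      using eventually_ge_at_top[of 0] by eventually_elim (rule bound)
  qed (simp_all add: tendsto_exp_linear_at_top[OF \<open>0 < \<delta>\<close>])
qed

end
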